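(* For the system $\dot n^x=P(n^x,n^y)$, $\dot n^y=Q(n^x,n^y)$, the set of stationary points in the open quadrant $(0,\infty)^2$ is either infinite (a curve of fixed points) or finite, and in the finite case it has: at most $3$ points if $\beta\ne0$ and $\mu\ne0$; at most $2$ points if $\beta=0,\mu=1$; at most $1$ point if $\beta=1,\mu=0$.
   Context: Let $r(x),r(y)>0$, $C(u,v)>0$ for $u,v\in\{x,y\}$, $\alpha(x,y)\in\mathbb R$, and $\beta,\mu\ge0$ with $\beta+\mu>0$. Define $$P(u,v)=\Big(r(x)-C(x,x)u-C(x,y)v+\frac{\alpha(x,y)}{\beta+\mu(u+v)}v\Big)u,\qquad Q(u,v)=\Big(r(y)-C(y,x)u-C(y,y)v-\frac{\alpha(x,y)}{\beta+\mu(u+v)}u\Big)v.$$ *)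

theory Defs
  imports Complex_Main
begin

text \<open>Two-species vector field. Parameters: rx = r(x), ry = r(y),
  cxx = C(x,x), cxy = C(x,y), cyx = C(y,x), cyy = C(y,y), a = alpha(x,y).\<close>


definition P_field :: "real \<Rightarrow> real \<Rightarrow> real \<Rightarrow> real \<Rightarrow> real \<Rightarrow> real \<Rightarrow> real \<Rightarrow> real \<Rightarrow> real" where
  "P_field rx cxx cxy a \<beta> \<mu> u v =
     (rx - cxx * u - cxy * v + a / (\<beta> + \<mu> * (u + v)) * v) * u"

definition Q_field :: "real \<Rightarrow> real \<Rightarrow> real \<Rightarrow> real \<Rightarrow> real \<Rightarrow> real \<Rightarrow> real \<Rightarrow> real \<Rightarrow> real" where
  "Q_field ry cyx cyy a \<beta> \<mu> u v =
     (ry - cyx * u - cyy * v - a / (\<beta> + \<mu> * (u + v)) * u) * v"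

definition stat_points ::
  "real \<Rightarrow> real \<Rightarrow> real \<Rightarrow> real \<Rightarrow> real \<Rightarrow> real \<Rightarrow> real \<Rightarrow> real \<Rightarrow> real \<Rightarrow> (real \<times> real) set" where
  "stat_points rx ry cxx cxy cyx cyy a \<beta> \<mu> =
     {(u, v). u > 0 \<and> v > 0 \<and>
        P_field rx cxx cxy a \<beta> \<mu> u v = 0 \<and> Q_field ry cyx cyy a \<beta> \<mu> u v = 0}"

end

theory Submission
  imports Defs "HOL-Computational_Algebra.Polynomial"
begin

text \<open>Write a point of the open quadrant as \<open>(p s, (1 - p) s)\<close> with \<open>0 < p < 1\<close> and \<open>s > 0\<close>.
  Along the ray of direction \<open>p\<close>, suitable linear combinations of the two cleared equilibrium
  equations say that \<open>s\<close> is a rational function \<open>R(p) / M(p)\<close> of \<open>p\<close> and that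
  \<open>(\<mu> A + \<alpha> M) R + \<beta> A M\<close> vanishes at \<open>p\<close>, where \<open>A\<close>, \<open>R\<close> are linear and \<open>M\<close> is quadratic
  in \<open>p\<close>. So the stationary points are in bijection with the roots in \<open>(0, 1)\<close> of a polynomial
  of degree at most 3: either it vanishes identically (a curve of fixed points) or there are
  at most 3 of them. For \<open>\<beta> = 0\<close> the factor \<open>R\<close>, and for \<open>\<mu> = 0\<close> the factor \<open>M\<close>, has no root in
  \<open>(0, 1)\<close>, which lowers the bound to 2, resp. 1.\<close>

lemma linear_system_eq_0_iff:
  fixes a b c d x y :: "'a::field"
  assumes "a * d - b * c \<noteq> 0"
  shows "a * x + b * y = 0 \<and> c * x + d * y = 0 \<longleftrightarrow> x = 0 \<and> y = 0"
proof
  assume "a * x + b * y = 0 \<and> c * x + d * y = 0"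
  then have e1: "a * x + b * y = 0" and e2: "c * x + d * y = 0" by simp_all
  have "(a * d - b * c) * x = d * (a * x + b * y) - b * (c * x + d * y)"
    and "(a * d - b * c) * y = a * (c * x + d * y) - c * (a * x + b * y)"
    by (simp_all add: algebra_simps)
  then have "(a * d - b * c) * x = 0" "(a * d - b * c) * y = 0"
    by (simp_all only: e1 e2 mult_zero_right diff_zero)
  with assms show "x = 0 \<and> y = 0" by simp
qed simp

lemma degree_linear_le: "degree [:a, b:] \<le> 1"
  by simp

lemma poly_convex_combination:
  fixes x y p :: "'a::comm_ring_1"
  shows "poly [:y, x - y:] p = x * p + y * (1 - p)"
  by (simp add: algebra_simps)

lemma convex_combination_pos:
  fixes x y p :: real
  assumes "x > 0" "y > 0" "0 < p" "p < 1"
  shows "x * p + y * (1 - p) > 0"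
  using assms by (simp add: add_pos_pos)

lemma roots_in_mult_right_eq:
  fixes q r :: "'a::idom poly"
  assumes "\<forall>p\<in>I. poly r p \<noteq> 0"
  shows "{p\<in>I. poly (q * r) p = 0} = {p\<in>I. poly q p = 0}"
  using assms by auto

lemma card_image_roots_in_le:
  fixes q :: "'a::idom poly"
  assumes "q \<noteq> 0"
  shows "finite (f ` {p\<in>I. poly q p = 0})" "card (f ` {p\<in>I. poly q p = 0}) \<le> degree q"
proof -
  have sub: "{p\<in>I. poly q p = 0} \<subseteq> {p. poly q p = 0}" by blast
  have fin: "finite {p\<in>I. poly q p = 0}"
    using finite_subset[OF sub poly_roots_finite[OF assms]] .
  then show "finite (f ` {p\<in>I. poly q p = 0})" by simp
  have "card (f ` {p\<in>I. poly q p = 0}) \<le> card {p\<in>I. poly q p = 0}"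
    using card_image_le[OF fin] .
  also have "\<dots> \<le> card {p. poly q p = 0}"
    using card_mono[OF poly_roots_finite[OF assms] sub] .
  also have "\<dots> \<le> degree q"
    using card_poly_roots_bound[OF assms] .
  finally show "card (f ` {p\<in>I. poly q p = 0}) \<le> degree q" .
qed

locale two_species =
  fixes rx ry cxx cxy cyx cyy a \<beta> \<mu> :: real
  assumes rx_pos: "rx > 0" and ry_pos: "ry > 0"
    and cxx_pos: "cxx > 0" and cxy_pos: "cxy > 0" and cyx_pos: "cyx > 0" and cyy_pos: "cyy > 0"
    and \<beta>_nonneg: "\<beta> \<ge> 0" and \<mu>_nonneg: "\<mu> \<ge> 0" and \<beta>_\<mu>_pos: "\<beta> + \<mu> > 0"
begin

abbreviation S :: "(real \<times> real) set" where
  "S \<equiv> stat_points rx ry cxx cxy cyx cyy a \<beta> \<mu>"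

text \<open>At \<open>(u, v) = (p s, (1 - p) s)\<close>, the competition felt by \<open>x\<close> and \<open>y\<close> is \<open>s\<close> times
  \<open>cx_poly\<close> resp. \<open>cy_poly\<close> at \<open>p\<close>; these are the paper's \<open>L\<^sub>x\<close>, \<open>L\<^sub>y\<close>, and \<open>growth_poly\<close>,
  \<open>crowding_poly\<close>, \<open>cross_poly\<close> are \<open>R\<close>, \<open>M\<close>, \<open>A\<close> of the header.\<close>

definition cx_poly :: "real poly" where "cx_poly = [:cxy, cxx - cxy:]"
definition cy_poly :: "real poly" where "cy_poly = [:cyy, cyx - cyy:]"
definition growth_poly :: "real poly" where "growth_poly = [:ry, rx - ry:]"
definition crowding_poly :: "real poly" where
  "crowding_poly = cy_poly * [:1, -1:] + cx_poly * [:0, 1:]"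
definition cross_poly :: "real poly" where
  "cross_poly = smult rx cy_poly - smult ry cx_poly"
definition equilibrium_poly :: "real poly" where
  "equilibrium_poly =
     (smult \<mu> cross_poly + smult a crowding_poly) * growth_poly
     + smult \<beta> (cross_poly * crowding_poly)"

definition radius :: "real \<Rightarrow> real" where
  "radius p = poly growth_poly p / poly crowding_poly p"

definition ray_point :: "real \<Rightarrow> real \<times> real" where
  "ray_point p = (p * radius p, (1 - p) * radius p)"

lemma poly_cx: "poly cx_poly p = cxx * p + cxy * (1 - p)"
  and poly_cy: "poly cy_poly p = cyx * p + cyy * (1 - p)"
  and poly_growth: "poly growth_poly p = rx * p + ry * (1 - p)"
  unfolding cx_poly_def cy_poly_def growth_poly_def by (simp_all only: poly_convex_combination)

lemma poly_crowding: "poly crowding_poly p = (1 - p) * poly cy_poly p + p * poly cx_poly p"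
  by (simp add: crowding_poly_def algebra_simps)

lemma poly_cross: "poly cross_poly p = rx * poly cy_poly p - ry * poly cx_poly p"
  by (simp add: cross_poly_def)

lemma
  assumes "0 < p" "p < 1"
  shows poly_cx_pos: "poly cx_poly p > 0" and poly_cy_pos: "poly cy_poly p > 0"
    and poly_growth_pos: "poly growth_poly p > 0"
  using assms rx_pos ry_pos cxx_pos cxy_pos cyx_pos cyy_pos
  by (simp_all only: poly_cx poly_cy poly_growth convex_combination_pos)

lemma poly_crowding_pos:
  assumes "0 < p" "p < 1"
  shows "poly crowding_poly p > 0"
  using assms poly_cx_pos[OF assms] poly_cy_pos[OF assms]
  by (simp add: poly_crowding add_pos_pos)

lemma radius_pos: "0 < p \<Longrightarrow> p < 1 \<Longrightarrow> radius p > 0"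
  by (simp add: radius_def poly_growth_pos poly_crowding_pos)

lemma denominator_pos: "s > 0 \<Longrightarrow> \<beta> + \<mu> * s > 0"
  using \<beta>_nonneg \<mu>_nonneg \<beta>_\<mu>_pos
  by (smt (verit) mult_nonneg_nonneg mult_pos_pos)

lemma P_field_ray_eq_0_iff:
  assumes "0 < p" "s > 0"
  shows "P_field rx cxx cxy a \<beta> \<mu> (p * s) ((1 - p) * s) = 0 \<longleftrightarrow>
         (rx - s * poly cx_poly p) * (\<beta> + \<mu> * s) + a * (1 - p) * s = 0"
proof -
  define D where "D = \<beta> + \<mu> * s"
  have D_pos: "D > 0" using denominator_pos[OF \<open>s > 0\<close>] by (simp add: D_def)
  have "P_field rx cxx cxy a \<beta> \<mu> (p * s) ((1 - p) * s) =
        (rx - s * poly cx_poly p + a / D * ((1 - p) * s)) * (p * s)"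
    by (simp add: P_field_def D_def poly_cx algebra_simps)
  also have "\<dots> = 0 \<longleftrightarrow> rx - s * poly cx_poly p + a / D * ((1 - p) * s) = 0"
    using assms by simp
  also have "\<dots> \<longleftrightarrow> (rx - s * poly cx_poly p) * D + a * (1 - p) * s = 0"
    using D_pos by (simp add: field_simps)
  finally show ?thesis by (simp add: D_def)
qed

lemma Q_field_ray_eq_0_iff:
  assumes "p < 1" "s > 0"
  shows "Q_field ry cyx cyy a \<beta> \<mu> (p * s) ((1 - p) * s) = 0 \<longleftrightarrow>
         (ry - s * poly cy_poly p) * (\<beta> + \<mu> * s) - a * p * s = 0"
proof -
  define D where "D = \<beta> + \<mu> * s"
  have D_pos: "D > 0" using denominator_pos[OF \<open>s > 0\<close>] by (simp add: D_def)
  have "Q_field ry cyx cyy a \<beta> \<mu> (p * s) ((1 - p) * s) =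
        (ry - s * poly cy_poly p - a / D * (p * s)) * ((1 - p) * s)"
    by (simp add: Q_field_def D_def poly_cy algebra_simps)
  also have "\<dots> = 0 \<longleftrightarrow> ry - s * poly cy_poly p - a / D * (p * s) = 0"
    using assms by simp
  also have "\<dots> \<longleftrightarrow> (ry - s * poly cy_poly p) * D - a * p * s = 0"
    using D_pos by (simp add: field_simps)
  finally show ?thesis by (simp add: D_def)
qed

text \<open>The combinations \<open>p e\<^sub>1 + (1 - p) e\<^sub>2\<close> and \<open>L\<^sub>y e\<^sub>1 - L\<^sub>x e\<^sub>2\<close> of the two cleared equations;
  their determinant is \<open>-M(p)\<close>.\<close>

lemma ray_point_stationary_iff:
  assumes p: "0 < p" "p < 1" and s: "s > 0"
  shows "(p * s, (1 - p) * s) \<in> S \<longleftrightarrow> s = radius p \<and> poly equilibrium_poly p = 0"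
proof -
  define D where "D = \<beta> + \<mu> * s"
  define Lx Ly M R A where "Lx = poly cx_poly p" and "Ly = poly cy_poly p"
    and "M = poly crowding_poly p" and "R = poly growth_poly p" and "A = poly cross_poly p"
  define e1 where "e1 = (rx - s * Lx) * D + a * (1 - p) * s"
  define e2 where "e2 = (ry - s * Ly) * D - a * p * s"
  have M_pos: "M > 0" and D_pos: "D > 0"
    using poly_crowding_pos[OF p] denominator_pos[OF s] by (simp_all add: M_def D_def)
  have "(p * s, (1 - p) * s) \<in> S \<longleftrightarrow> e1 = 0 \<and> e2 = 0"
    using p s by (simp add: stat_points_def P_field_ray_eq_0_iff Q_field_ray_eq_0_iff
        e1_def e2_def Lx_def Ly_def D_def)
  also have "\<dots> \<longleftrightarrow> p * e1 + (1 - p) * e2 = 0 \<and> Ly * e1 + - Lx * e2 = 0"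
    using M_pos by (intro linear_system_eq_0_iff[symmetric])
      (simp add: M_def poly_crowding Lx_def Ly_def algebra_simps)
  also have "p * e1 + (1 - p) * e2 = (R - s * M) * D"
    by (simp add: e1_def e2_def R_def M_def Lx_def Ly_def poly_growth poly_crowding algebra_simps)
  also have "Ly * e1 + - Lx * e2 = A * D + a * s * M"
    by (simp add: e1_def e2_def A_def M_def Lx_def Ly_def poly_cross poly_crowding algebra_simps)
  also have "(R - s * M) * D = 0 \<longleftrightarrow> s = radius p"
    using M_pos D_pos by (auto simp: radius_def R_def M_def field_simps)
  also have "s = radius p \<and> A * D + a * s * M = 0 \<longleftrightarrow>
             s = radius p \<and> poly equilibrium_poly p = 0"
  proof -
    have "R = s * M \<Longrightarrow> poly equilibrium_poly p = M * (A * D + a * s * M)"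
      by (simp add: equilibrium_poly_def A_def M_def R_def D_def algebra_simps)
    then show ?thesis
      using M_pos by (auto simp: radius_def R_def M_def)
  qed
  finally show ?thesis .
qed

lemma stat_points_eq_image:
  "S = ray_point ` {p \<in> {0<..<1}. poly equilibrium_poly p = 0}"
proof (intro equalityI subsetI)
  fix w assume "w \<in> S"
  then obtain u v where w: "w = (u, v)" and u: "u > 0" and v: "v > 0"
    by (auto simp: stat_points_def)
  define s p where "s = u + v" and "p = u / (u + v)"
  have uv: "u = p * s" "v = (1 - p) * s" and s: "s > 0"
    using u v by (simp_all add: s_def p_def field_simps)
  have p: "0 < p" "p < 1" using u v by (simp_all add: p_def field_simps)
  have "s = radius p \<and> poly equilibrium_poly p = 0"
    using \<open>w \<in> S\<close> ray_point_stationary_iff[OF p s] by (simp add: w uv)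
  then show "w \<in> ray_point ` {p \<in> {0<..<1}. poly equilibrium_poly p = 0}"
    using p by (auto simp: w uv ray_point_def)
next
  fix w assume "w \<in> ray_point ` {p \<in> {0<..<1}. poly equilibrium_poly p = 0}"
  then obtain p where p: "0 < p" "p < 1" and K: "poly equilibrium_poly p = 0"
    and w: "w = ray_point p" by auto
  show "w \<in> S"
    using ray_point_stationary_iff[OF p radius_pos[OF p]] K by (simp add: w ray_point_def)
qed

lemma inj_on_ray_point: "inj_on ray_point {0<..<1}"
proof (rule inj_onI)
  fix p q :: real assume p: "p \<in> {0<..<1}" and "q \<in> {0<..<1}" and eq: "ray_point p = ray_point q"
  then have "p * radius p = q * radius q" "(1 - p) * radius p = (1 - q) * radius q"
    by (simp_all add: ray_point_def)
  then have "radius p = radius q" by (simp add: algebra_simps)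
  with \<open>p * radius p = q * radius q\<close> radius_pos p show "p = q" by force
qed

lemma degree_cross_poly: "degree cross_poly \<le> 1"
  unfolding cross_poly_def cx_poly_def cy_poly_def
  by (intro degree_diff_le order.trans[OF degree_smult_le] degree_linear_le)

lemma degree_crowding_poly: "degree crowding_poly \<le> 2"
proof -
  have "degree (cy_poly * [:1, -1:]) \<le> 2" "degree (cx_poly * [:0, 1:]) \<le> 2"
    using degree_mult_le[of cy_poly "[:1, -1:]"] degree_mult_le[of cx_poly "[:0, 1:]"]
    by (simp_all add: cx_poly_def cy_poly_def)
  then show ?thesis unfolding crowding_poly_def by (rule degree_add_le)
qed

lemma degree_equilibrium_poly: "degree equilibrium_poly \<le> 3"
proof -
  have "degree (smult \<mu> cross_poly + smult a crowding_poly) \<le> 2"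
    using degree_cross_poly degree_crowding_poly
    by (intro degree_add_le order.trans[OF degree_smult_le]) auto
  moreover have "degree growth_poly \<le> 1"
    unfolding growth_poly_def by (rule degree_linear_le)
  ultimately have "degree ((smult \<mu> cross_poly + smult a crowding_poly) * growth_poly) \<le> 3"
    using degree_mult_le[of "smult \<mu> cross_poly + smult a crowding_poly" growth_poly] by linarith
  moreover have "degree (smult \<beta> (cross_poly * crowding_poly)) \<le> 3"
    using degree_mult_le[of cross_poly crowding_poly] degree_cross_poly degree_crowding_poly
    by simp
  ultimately show ?thesis unfolding equilibrium_poly_def by (rule degree_add_le)
qed

lemma equilibrium_poly_if_\<beta>_0:
  assumes "\<beta> = 0"
  shows "equilibrium_poly = (smult \<mu> cross_poly + smult a crowding_poly) * growth_poly"
  unfolding equilibrium_poly_def using assms by simp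

lemma equilibrium_poly_if_\<mu>_0:
  assumes "\<mu> = 0"
  shows "equilibrium_poly = (smult a growth_poly + smult \<beta> cross_poly) * crowding_poly"
  unfolding equilibrium_poly_def using assms by (simp add: algebra_simps)

lemma finite_card_stat_points_le:
  assumes "equilibrium_poly = q * r" "q \<noteq> 0" "\<forall>p\<in>{0<..<1}. poly r p \<noteq> 0"
  shows "finite S" "card S \<le> degree q"
proof -
  have "S = ray_point ` {p \<in> {0<..<1}. poly q p = 0}"
    unfolding stat_points_eq_image assms(1) roots_in_mult_right_eq[OF assms(3)] ..
  then show "finite S" "card S \<le> degree q"
    using card_image_roots_in_le[OF \<open>q \<noteq> 0\<close>, of ray_point "{0<..<1}"] by simp_all
qed

lemma stat_points_infinite_or_card_le:
  "infinite S \<or>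
   (finite S \<and>
    card S \<le> 3 \<and>
    (\<beta> = 0 \<longrightarrow> card S \<le> 2) \<and>
    (\<mu> = 0 \<longrightarrow> card S \<le> 1))"
proof (cases "equilibrium_poly = 0")
  case True
  then have "{p \<in> {0<..<1}. poly equilibrium_poly p = 0} = {0<..<1}" by auto
  then have "S = ray_point ` {0<..<1}"
    by (simp add: stat_points_eq_image)
  then have "infinite S"
    using finite_imageD[OF _ inj_on_ray_point] infinite_Ioo[of "0::real" 1] by auto
  then show ?thesis ..
next
  case False
  have "finite S" "card S \<le> 3"
    using finite_card_stat_points_le[of _ 1] False degree_equilibrium_poly by auto
  moreover have "card S \<le> 2" if "\<beta> = 0"
  proof -
    let ?q = "smult \<mu> cross_poly + smult a crowding_poly"
    have "?q \<noteq> 0" "degree ?q \<le> 2"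
      using False equilibrium_poly_if_\<beta>_0[OF that(1)] degree_cross_poly degree_crowding_poly
      by (auto intro!: degree_add_le order.trans[OF degree_smult_le])
    then show ?thesis
      using finite_card_stat_points_le(2)[OF equilibrium_poly_if_\<beta>_0[OF that(1)]]
        poly_growth_pos by fastforce
  qed
  moreover have "card S \<le> 1" if "\<mu> = 0"
  proof -
    let ?q = "smult a growth_poly + smult \<beta> cross_poly"
    have "?q \<noteq> 0" "degree ?q \<le> 1"
      using False equilibrium_poly_if_\<mu>_0[OF that] degree_cross_poly
      by (auto intro!: degree_add_le order.trans[OF degree_smult_le] simp: growth_poly_def)
    then show ?thesis
      using finite_card_stat_points_le(2)[OF equilibrium_poly_if_\<mu>_0[OF that]]
        poly_crowding_pos by fastforce
  qed
  ultimately show ?thesis by blast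
qed

end

theorem mainTheorem7:
  fixes rx ry cxx cxy cyx cyy a \<beta> \<mu> :: real
  assumes "rx > 0" "ry > 0"
    and "cxx > 0" "cxy > 0" "cyx > 0" "cyy > 0"
    and "\<beta> \<ge> 0" "\<mu> \<ge> 0" "\<beta> + \<mu> > 0"
  defines "S \<equiv> stat_points rx ry cxx cxy cyx cyy a \<beta> \<mu>"
  shows "infinite S \<or>
         (finite S \<and>
          (\<beta> \<noteq> 0 \<and> \<mu> \<noteq> 0 \<longrightarrow> card S \<le> 3) \<and>
          (\<beta> = 0 \<and> \<mu> = 1 \<longrightarrow> card S \<le> 2) \<and>
          (\<beta> = 1 \<and> \<mu> = 0 \<longrightarrow> card S \<le> 1))"
proof -
  interpret two_species rx ry cxx cxy cyx cyy a \<beta> \<mu>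
    using assms(1-9) by unfold_locales
  show ?thesis
    using stat_points_infinite_or_card_le unfolding S_def by blast
qed

end
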